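(* Let $S \subseteq \mathbb{R}^r$ be a linear subspace, $0 \le d \le r$, and $C = C(S,d)$ the associated s-cone. For a nonzero vector $x \in C$, the following are equivalent: (i) $x$ is support-minimal; (ii) $x$ is support-wise non-decomposable; (iii) $x$ is conformally non-decomposable.
   Context: For $x \in \mathbb{R}^n$, $\operatorname{supp}(x) = \{ i \mid x_i \neq 0\}$, and $\operatorname{sign}(x) \in \{-,0,+\}^n$ is obtained by applying the sign function componentwise; the relations $0<-$, $0<+$ induce a componentwise partial order on $\{-,0,+\}^n$. For a linear subspace $S \subseteq \mathbb{R}^r$ and $0 \le d \le r$, the s-cone is $C(S,d) = \{ (x,y) \in \mathbb{R}^{(r-d)+d} \mid (x,y) \in S,\ y \ge 0\}$. For a convex cone $C$ and nonzero $x \in C$: $x$ is support-minimal if for all nonzero $x' \in C$, $\operatorname{supp}(x') \subseteq \operatorname{supp}(x)$ implies $\operatorname{supp}(x') = \operatorname{supp}(x)$; $x$ is support-wise non-decomposable if for all nonzero $x^1,x^2 \in C$ with $\operatorname{supp}(x^1),\operatorname{supp}(x^2) \subseteq \operatorname{supp}(x)$, $x = x^1 + x^2$ implies $\operatorname{supp}(x^1) = \operatorname{supp}(x^2)$; $x$ is conformally non-decomposable if for all nonzero $x^1,x^2 \in C$ with $\operatorname{sign}(x^1),\operatorname{sign}(x^2) \le \operatorname{sign}(x)$, $x = x^1 + x^2$ implies $x^1 = \lambda x^2$ for some $\lambda > 0$. *)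

theory Defs
  imports "HOL-Analysis.Analysis"
begin

text \<open>Vectors of R^r are modelled as functions nat => real that vanish at indices >= r;
  coordinate i (0-based, i < r) is v i.  The last d coordinates (indices r-d .. r-1)
  form the y-part of the s-cone.\<close>

definition Rn :: "nat \<Rightarrow> (nat \<Rightarrow> real) set" where
  "Rn r = {v. \<forall>i\<ge>r. v i = 0}"

definition supp :: "(nat \<Rightarrow> real) \<Rightarrow> nat set" where
  "supp x = {i. x i \<noteq> 0}"

definition sign_le :: "(nat \<Rightarrow> real) \<Rightarrow> (nat \<Rightarrow> real) \<Rightarrow> bool" where
  "sign_le x y = (\<forall>i. sgn (x i) = 0 \<or> sgn (x i) = sgn (y i))"

definition scone :: "(nat \<Rightarrow> real) set \<Rightarrow> nat \<Rightarrow> nat \<Rightarrow> (nat \<Rightarrow> real) set" where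
  "scone S r d = {v. v \<in> S \<and> (\<forall>i. r - d \<le> i \<and> i < r \<longrightarrow> v i \<ge> 0)}"

definition support_minimal :: "(nat \<Rightarrow> real) set \<Rightarrow> (nat \<Rightarrow> real) \<Rightarrow> bool" where
  "support_minimal C x = (x \<in> C \<and> x \<noteq> (\<lambda>_. 0) \<and>
     (\<forall>x'\<in>C. x' \<noteq> (\<lambda>_. 0) \<longrightarrow> supp x' \<subseteq> supp x \<longrightarrow> supp x' = supp x))"

definition supportwise_nondecomposable :: "(nat \<Rightarrow> real) set \<Rightarrow> (nat \<Rightarrow> real) \<Rightarrow> bool" where
  "supportwise_nondecomposable C x = (x \<in> C \<and> x \<noteq> (\<lambda>_. 0) \<and>
     (\<forall>x1\<in>C. \<forall>x2\<in>C. x1 \<noteq> (\<lambda>_. 0) \<longrightarrow> x2 \<noteq> (\<lambda>_. 0) \<longrightarrow> supp x1 \<subseteq> supp x \<longrightarrow> supp x2 \<subseteq> supp x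
        \<longrightarrow> x = (\<lambda>i. x1 i + x2 i) \<longrightarrow> supp x1 = supp x2))"

definition conformally_nondecomposable :: "(nat \<Rightarrow> real) set \<Rightarrow> (nat \<Rightarrow> real) \<Rightarrow> bool" where
  "conformally_nondecomposable C x = (x \<in> C \<and> x \<noteq> (\<lambda>_. 0) \<and>
     (\<forall>x1\<in>C. \<forall>x2\<in>C. x1 \<noteq> (\<lambda>_. 0) \<longrightarrow> x2 \<noteq> (\<lambda>_. 0) \<longrightarrow> sign_le x1 x \<longrightarrow> sign_le x2 x
        \<longrightarrow> x = (\<lambda>i. x1 i + x2 i) \<longrightarrow> (\<exists>c>0. x1 = (\<lambda>i. c * x2 i))))"

end

theory Submission
  imports Defs
begin

text \<open>The key property of an s-cone C = C(S,d) is that every vector of S conformal to some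
  x \<in> C lies in C again: the sign constraints on the y-part are inherited from x.
  For y conformal to x and w with supp w \<subseteq> supp y, subtracting the largest multiple l w that
  keeps y - l w conformal to x kills a coordinate of supp w.
  If x is support-minimal and x = x1 + x2 conformally, this applied to x1, x2 gives
  x1 - l x2 \<in> C with smaller support, hence x1 = l x2.  If x is not support-minimal, it applied to
  x and a vector of smaller support gives a conformal z \<noteq> 0 with smaller support, and
  x = (x - e z) + e z for small e > 0 violates both non-decomposability notions.\<close>

lemma sign_le_iff: "sign_le a b \<longleftrightarrow> (\<forall>i. a i = 0 \<or> 0 < a i * b i)"
  unfolding sign_le_def
proof (intro iffI allI)
  fix i assume "\<forall>i. sgn (a i) = 0 \<or> sgn (a i) = sgn (b i)"
  then have "sgn (a i) = 0 \<or> sgn (a i) = sgn (b i)" ..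
  then show "a i = 0 \<or> 0 < a i * b i"
    by (cases "a i" "0::real" rule: linorder_cases; cases "b i" "0::real" rule: linorder_cases)
       (auto simp: mult_pos_pos mult_neg_neg)
next
  fix i assume "\<forall>i. a i = 0 \<or> 0 < a i * b i"
  then have "a i = 0 \<or> 0 < a i * b i" ..
  then show "sgn (a i) = 0 \<or> sgn (a i) = sgn (b i)"
    by (auto simp: zero_less_mult_iff)
qed

lemma sign_le_refl: "sign_le x x"
  by (simp add: sign_le_iff) (metis not_real_square_gt_zero)

lemma same_sign_trans: "0 < a * c \<Longrightarrow> 0 < b * c \<Longrightarrow> 0 < a * (b::real)"
  by (auto simp: zero_less_mult_iff)

lemma supp_subset_if_sign_le: "sign_le a b \<Longrightarrow> supp a \<subseteq> supp b"
  by (auto simp: sign_le_iff supp_def)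

lemma supp_mult_const: "(c::real) \<noteq> 0 \<Longrightarrow> supp (\<lambda>i. c * u i) = supp u"
  by (auto simp: supp_def)

lemma supp_empty_iff: "supp u = {} \<longleftrightarrow> u = (\<lambda>_. 0)"
  by (auto simp: supp_def)

lemma finite_supp_Rn: "v \<in> Rn r \<Longrightarrow> finite (supp v)"
  by (rule finite_subset[of _ "{..<r}"]) (auto simp: Rn_def supp_def not_less[symmetric])

lemma scone_conformal_closed:
  assumes "x \<in> scone S r d" "u \<in> S" "sign_le u x"
  shows "u \<in> scone S r d"
proof -
  have "0 \<le> u i" if "r - d \<le> i" "i < r" for i
  proof -
    have "0 \<le> x i" using assms(1) that by (simp add: scone_def)
    moreover have "u i = 0 \<or> 0 < u i * x i" using assms(3) by (simp add: sign_le_iff)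
    ultimately show ?thesis by (auto simp: zero_less_mult_iff)
  qed
  then show ?thesis using assms(2) by (simp add: scone_def)
qed

lemma exists_min_ratio:
  fixes a b :: "nat \<Rightarrow> real"
  assumes "finite P" "P \<noteq> {}" "\<forall>i\<in>P. 0 < a i * b i"
  obtains l i0 where "0 < l" "\<forall>i\<in>P. l \<le> a i / b i" "i0 \<in> P" "a i0 = l * b i0"
proof -
  define l where "l = Min ((\<lambda>i. a i / b i) ` P)"
  have "l \<in> (\<lambda>i. a i / b i) ` P" unfolding l_def using assms by (intro Min_in) auto
  then obtain i0 where i0: "i0 \<in> P" "l = a i0 / b i0" by auto
  have "b i0 \<noteq> 0" using assms(3) i0 by auto
  moreover have "0 < l" using i0 assms(3) by (simp add: zero_less_divide_iff zero_less_mult_iff)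
  moreover have "\<forall>i\<in>P. l \<le> a i / b i" unfolding l_def using assms by auto
  ultimately show thesis using that i0 by auto
qed

text \<open>The ratio step: l is the minimum of y i / w i over the coordinates where w agrees in sign
  with x; on the remaining coordinates of supp w subtracting l w only moves y further from 0.\<close>

lemma conformal_ratio_reduction:
  fixes x y w :: "nat \<Rightarrow> real"
  assumes "finite (supp w)" "sign_le y x" "supp w \<subseteq> supp y" "0 < w i * x i"
  obtains l i0 where "0 < l" "i0 \<in> supp w" "y i0 = l * w i0"
    "sign_le (\<lambda>j. y j - l * w j) x"
proof -
  define P where "P = {j \<in> supp w. 0 < w j * x j}"
  have yx: "0 < y j * x j" if "j \<in> supp w" for j
    using assms(2,3) that by (auto simp: sign_le_iff supp_def)
  have pos: "\<forall>j\<in>P. 0 < y j * w j"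
    using yx same_sign_trans by (auto simp: P_def)
  have "w i \<noteq> 0" using assms(4) by auto
  then have "finite P" "P \<noteq> {}"
    using assms(1,4) by (auto simp: P_def supp_def)
  then obtain l i0 where l: "0 < l" "\<forall>j\<in>P. l \<le> y j / w j" "i0 \<in> P" "y i0 = l * w i0"
    using pos by (rule exists_min_ratio)
  have "y j - l * w j = 0 \<or> 0 < (y j - l * w j) * x j" for j
  proof (cases "j \<in> supp w")
    case False
    then show ?thesis using assms(2) by (simp add: supp_def sign_le_iff)
  next
    case True
    show ?thesis
    proof (cases "j \<in> P")
      case True
      then have wj: "w j \<noteq> 0" "0 < w j * x j" and ge: "l \<le> y j / w j"
        using l(2) by (auto simp: P_def supp_def)
      have eq: "y j - l * w j = w j * (y j / w j - l)" using wj(1) by (simp add: field_simps)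
      show ?thesis
      proof (cases "y j / w j = l")
        case False
        with ge wj(2) have "0 < (y j / w j - l) * (w j * x j)" by simp
        then show ?thesis by (simp add: eq ac_simps)
      qed (simp add: eq)
    next
      case False
      have "w j \<noteq> 0" "x j \<noteq> 0" using \<open>j \<in> supp w\<close> yx[OF \<open>j \<in> supp w\<close>] by (auto simp: supp_def)
      then have "w j * x j \<noteq> 0" by simp
      moreover have "\<not> 0 < w j * x j" using False \<open>j \<in> supp w\<close> by (simp add: P_def)
      ultimately have "w j * x j < 0" by linarith
      have "(y j - l * w j) * x j = y j * x j - l * (w j * x j)" by (simp add: algebra_simps)
      also have "\<dots> > 0"
        using yx[OF \<open>j \<in> supp w\<close>] mult_pos_neg[OF l(1) \<open>w j * x j < 0\<close>] by linarith
      finally show ?thesis ..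
    qed
  qed
  then show thesis using that l by (auto simp: sign_le_iff P_def)
qed

locale s_cone =
  fixes S :: "(nat \<Rightarrow> real) set" and r d :: nat
  assumes add_in: "\<And>u v. u \<in> S \<Longrightarrow> v \<in> S \<Longrightarrow> (\<lambda>i. u i + v i) \<in> S"
    and scale_in: "\<And>c u. u \<in> S \<Longrightarrow> (\<lambda>i. c * u i) \<in> S"
    and subset_Rn: "S \<subseteq> Rn r"
begin

abbreviation "C \<equiv> scone S r d"

lemma diff_scale_in: "u \<in> S \<Longrightarrow> v \<in> S \<Longrightarrow> (\<lambda>i. u i - c * v i) \<in> S"
  using add_in[of u "\<lambda>i. (- c) * v i"] scale_in[of v "- c"] by simp

lemma finite_supp: "u \<in> S \<Longrightarrow> finite (supp u)"
  using subset_Rn finite_supp_Rn by blast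

lemma scone_in_S: "u \<in> C \<Longrightarrow> u \<in> S"
  by (simp add: scone_def)

lemma proper_conformal_decomposition:
  assumes "x \<in> C" "z \<in> S" "z \<noteq> (\<lambda>_. 0)" "sign_le z x"
  obtains x1 x2 where "x1 \<in> C" "x2 \<in> C" "sign_le x1 x" "sign_le x2 x"
    "supp x1 = supp x" "supp x2 = supp z" "x = (\<lambda>i. x1 i + x2 i)"
proof -
  obtain i where "z i \<noteq> 0" using assms(3) by auto
  with assms(4) have "0 < z i * x i" by (auto simp: sign_le_iff)
  then obtain l i0 where l: "0 < l" "i0 \<in> supp z" "x i0 = l * z i0"
      "sign_le (\<lambda>j. x j - l * z j) x"
    by (rule conformal_ratio_reduction[OF finite_supp[OF assms(2)] sign_le_refl
          supp_subset_if_sign_le[OF assms(4)]])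
  define x1 where "x1 = (\<lambda>j. x j - l / 2 * z j)"
  define x2 where "x2 = (\<lambda>j. l / 2 * z j)"
  \<comment> \<open>x1 is the midpoint of x and x - l z, both of which are conformal to x.\<close>
  have mid: "x1 j * x j = (x j * x j + (x j - l * z j) * x j) / 2" for j
    by (simp add: x1_def algebra_simps)
  have x1_pos: "0 < x1 j * x j" if "x j \<noteq> 0" for j
  proof -
    have "0 < x j * x j" using that by (metis not_real_square_gt_zero)
    moreover have "0 \<le> (x j - l * z j) * x j" using l(4) by (auto simp: sign_le_iff order_le_less)
    ultimately show ?thesis by (simp add: mid)
  qed
  have "sign_le x1 x"
    unfolding sign_le_iff
  proof
    fix j show "x1 j = 0 \<or> 0 < x1 j * x j"
      using x1_pos supp_subset_if_sign_le[OF assms(4)] by (cases "x j = 0") (auto simp: x1_def supp_def)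
  qed
  moreover have "sign_le x2 x"
    using assms(4) l(1) by (auto simp: sign_le_iff x2_def mult.assoc)
  moreover have "supp x1 = supp x"
    using supp_subset_if_sign_le[OF \<open>sign_le x1 x\<close>] x1_pos by (force simp: supp_def)
  moreover have "supp x2 = supp z"
    unfolding x2_def using l(1) supp_mult_const[of "l / 2" z] by simp
  moreover have "x1 \<in> S" "x2 \<in> S"
    unfolding x1_def x2_def using diff_scale_in[OF scone_in_S[OF assms(1)] assms(2)] scale_in[OF assms(2)]
    by blast+
  moreover have "x = (\<lambda>i. x1 i + x2 i)" by (simp add: x1_def x2_def)
  ultimately show thesis
    using that scone_conformal_closed[OF assms(1)] by blast
qed

lemma decomposable_if_proper_conformal:
  assumes "x \<in> C" "z \<in> S" "z \<noteq> (\<lambda>_. 0)" "sign_le z x" "supp z \<noteq> supp x"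
  shows "\<not> supportwise_nondecomposable C x \<and> \<not> conformally_nondecomposable C x"
proof -
  obtain x1 x2 where x: "x1 \<in> C" "x2 \<in> C" "sign_le x1 x" "sign_le x2 x"
    "supp x1 = supp x" "supp x2 = supp z" "x = (\<lambda>i. x1 i + x2 i)"
    using proper_conformal_decomposition[OF assms(1-4)] .
  have "supp z \<noteq> {}" using assms(3) by (simp add: supp_empty_iff)
  moreover have "supp z \<subseteq> supp x" using supp_subset_if_sign_le[OF assms(4)] .
  ultimately have ne: "x1 \<noteq> (\<lambda>_. 0)" "x2 \<noteq> (\<lambda>_. 0)" "supp x1 \<noteq> supp x2"
    using x(5,6) assms(5) by (auto simp flip: supp_empty_iff)
  have "\<not> supportwise_nondecomposable C x"
    unfolding supportwise_nondecomposable_def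
    using x(1,2,7) ne supp_subset_if_sign_le[OF x(3)] supp_subset_if_sign_le[OF x(4)] by blast
  moreover have "\<not> conformally_nondecomposable C x"
  proof
    assume "conformally_nondecomposable C x"
    then obtain c where "0 < c" "x1 = (\<lambda>i. c * x2 i)"
      unfolding conformally_nondecomposable_def using x(1-4,7) ne(1,2) by blast
    then show False using ne(3) by (simp add: supp_mult_const)
  qed
  ultimately show ?thesis ..
qed

lemma proper_conformal_if_not_support_minimal:
  assumes "x \<in> C" "x \<noteq> (\<lambda>_. 0)" "\<not> support_minimal C x"
  obtains z where "z \<in> S" "z \<noteq> (\<lambda>_. 0)" "sign_le z x" "supp z \<noteq> supp x"
proof -
  obtain x' where x': "x' \<in> C" "x' \<noteq> (\<lambda>_. 0)" "supp x' \<subseteq> supp x" "supp x' \<noteq> supp x"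
    using assms unfolding support_minimal_def by blast
  then obtain i where "x' i \<noteq> 0" "x i \<noteq> 0" by (auto simp: supp_def)
  \<comment> \<open>replace x' by -x' if necessary, so that it agrees in sign with x somewhere\<close>
  then obtain w where w: "w \<in> S" "supp w = supp x'" "0 < w i * x i"
  proof (cases "0 < x' i * x i")
    case False
    then have "0 < (-1) * x' i * x i"
      using \<open>x' i \<noteq> 0\<close> \<open>x i \<noteq> 0\<close> by (auto simp: not_less order_le_less)
    moreover have "(\<lambda>j. (-1) * x' j) \<in> S" by (rule scale_in[OF scone_in_S[OF x'(1)]])
    moreover have "supp (\<lambda>j. (-1) * x' j) = supp x'" by (rule supp_mult_const) simp
    ultimately show thesis using that by simp
  qed (use that scone_in_S[OF x'(1)] in blast)
  have "supp w \<subseteq> supp x" using w(2) x'(3) by simp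
  then obtain l i0 where l: "0 < l" "i0 \<in> supp w" "x i0 = l * w i0"
    and conf: "sign_le (\<lambda>j. x j - l * w j) x"
    using conformal_ratio_reduction[where y = x, OF finite_supp[OF w(1)] sign_le_refl _ w(3)] by blast
  have "(\<lambda>j. x j - l * w j) \<noteq> (\<lambda>_. 0)"
  proof
    assume "(\<lambda>j. x j - l * w j) = (\<lambda>_. 0)"
    then have "x = (\<lambda>j. l * w j)" by (simp add: fun_eq_iff)
    then show False using l(1) w(2) x'(4) by (simp add: supp_mult_const)
  qed
  moreover have "supp (\<lambda>j. x j - l * w j) \<noteq> supp x"
    using l w(2) x'(3) by (auto simp: supp_def)
  ultimately show thesis
    by (rule that[OF diff_scale_in[OF scone_in_S[OF assms(1)] w(1)] _ conf])
qed

lemma conformally_nondecomposable_if_support_minimal: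
  assumes sm: "support_minimal C x"
  shows "conformally_nondecomposable C x"
  unfolding conformally_nondecomposable_def
proof (intro conjI ballI impI)
  show xC: "x \<in> C" and "x \<noteq> (\<lambda>_. 0)" using sm by (auto simp: support_minimal_def)
  fix x1 x2 assume x12: "x1 \<in> C" "x2 \<in> C" "x1 \<noteq> (\<lambda>_. 0)" "x2 \<noteq> (\<lambda>_. 0)"
    "sign_le x1 x" "sign_le x2 x"
  have full: "supp x1 = supp x" "supp x2 = supp x"
    using sm x12 supp_subset_if_sign_le unfolding support_minimal_def by blast+
  obtain i where "x2 i \<noteq> 0" using x12(4) by auto
  then have "0 < x2 i * x i" using x12(6) by (auto simp: sign_le_iff)
  moreover have "supp x2 \<subseteq> supp x1" using full by simp
  ultimately obtain l i0 where l: "0 < l" "i0 \<in> supp x2" "x1 i0 = l * x2 i0"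
    and conf: "sign_le (\<lambda>j. x1 j - l * x2 j) x"
    using conformal_ratio_reduction[OF finite_supp[OF scone_in_S[OF x12(2)]] x12(5)] by blast
  have "(\<lambda>j. x1 j - l * x2 j) \<in> C"
    using scone_conformal_closed[OF xC diff_scale_in[OF scone_in_S scone_in_S] conf] x12(1,2) .
  moreover have "supp (\<lambda>j. x1 j - l * x2 j) \<noteq> supp x"
    using l full by (auto simp: supp_def)
  ultimately have "(\<lambda>j. x1 j - l * x2 j) = (\<lambda>_. 0)"
    using sm supp_subset_if_sign_le[OF conf] unfolding support_minimal_def by blast
  then have "x1 = (\<lambda>j. l * x2 j)" by (simp add: fun_eq_iff)
  with l(1) show "\<exists>c>0. x1 = (\<lambda>i. c * x2 i)" by blast
qed

lemma supportwise_nondecomposable_if_support_minimal: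
  "support_minimal C x \<Longrightarrow> supportwise_nondecomposable C x"
  unfolding support_minimal_def supportwise_nondecomposable_def by blast

end

theorem proposition2:
  fixes S :: "(nat \<Rightarrow> real) set" and r d :: nat and x :: "nat \<Rightarrow> real"
  assumes "(\<lambda>_. 0) \<in> S" and "\<And>u v. u \<in> S \<Longrightarrow> v \<in> S \<Longrightarrow> (\<lambda>i. u i + v i) \<in> S"
    and "\<And>c u. u \<in> S \<Longrightarrow> (\<lambda>i. c * u i) \<in> S" and "S \<subseteq> Rn r" and "d \<le> r"
    and "x \<in> scone S r d" and "x \<noteq> (\<lambda>_. 0)"
  shows "(support_minimal (scone S r d) x \<longleftrightarrow> supportwise_nondecomposable (scone S r d) x)
       \<and> (supportwise_nondecomposable (scone S r d) x \<longleftrightarrow> conformally_nondecomposable (scone S r d) x)"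
proof -
  interpret s_cone S r d using assms(2-4) by unfold_locales
  have "\<not> supportwise_nondecomposable C x \<and> \<not> conformally_nondecomposable C x"
    if "\<not> support_minimal C x"
    by (rule proper_conformal_if_not_support_minimal[OF assms(6,7) that])
      (rule decomposable_if_proper_conformal[OF assms(6)])
  then show ?thesis
    using supportwise_nondecomposable_if_support_minimal
      conformally_nondecomposable_if_support_minimal by blast
qed

end
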